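(* If $(A,\Delta)$ is a generalized multiplier Hopf coquasigroup with an identity, then $(A,\Delta)$ is a Hopf coquasigroup.
   Context: A generalized multiplier Hopf coquasigroup is: an associative algebra $A$ over a field $k$ with non-degenerate product, an algebra homomorphism $\Delta:A\to M(A\otimes A)$ (not necessarily coassociative) with Galois maps $T_{1}(a\otimes b)=\Delta(a)(1\otimes b)$, $T_{2}(a\otimes b)=(a\otimes 1)\Delta(b)$ in $A\otimes A$, and a linear $\varepsilon:A\to k$ with $(\varepsilon\otimes\iota)T_{1}(a\otimes b)=ab=(\iota\otimes\varepsilon)T_{2}(a\otimes b)$, such that $T_{1},T_{2}$ are bijective, $T_{1}^{-1}=(\iota\otimes\varepsilon\otimes\iota)(\iota\otimes T_{1}^{-1})(\Delta\otimes\iota)$ and $T_{2}^{-1}=(\iota\otimes\varepsilon\otimes\iota)(T_{2}^{-1}\otimes\iota)(\iota\otimes\Delta)$. The antipode $S$ is defined by $S(a)b=(\varepsilon\otimes\iota)T_{1}^{-1}(a\otimes b)$. If $A$ has an identity then $M(A)=A$, $M(A\otimes A)=A\otimes A$. A Hopf coquasigroup (in the sense of Klim–Majid) is a unital algebra $A$ with algebra maps $\Delta:A\to A\otimes A$, $\varepsilon:A\to k$ (counital, $\Delta$ not necessarily coassociative) and a linear $S:A\to A$ with $(m\otimes\iota)(S\otimes\Delta)\Delta(a)=1\otimes a=(m\otimes\iota)(\iota\otimes S\otimes\iota)(\iota\otimes\Delta)\Delta(a)$ and $(\iota\otimes m)(\Delta\otimes S)\Delta(a)=a\otimes 1=(\iota\otimes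 m)(\iota\otimes S\otimes\iota)(\Delta\otimes\iota)\Delta(a)$. *)

theory Defs
  imports "HOL-Library.Poly_Mapping"
begin

text \<open>
  Vector spaces over a field 'k are modelled by their coordinates with respect to a
  (Hamel) basis: a k-vector space with basis indexed by the type 'b is the space
  'b \<Rightarrow>0 'k of finitely supported functions.  Every vector space is of this form
  up to isomorphism.  The tensor product of such spaces is then again free, with
  basis indexed by the product of the index types; this gives A \<otimes> A and
  A \<otimes> (A \<otimes> A), (A \<otimes> A) \<otimes> A canonically.
\<close>

type_synonym ('b, 'k) vec = "'b \<Rightarrow>\<^sub>0 'k"

definition vsc :: "'k::field \<Rightarrow> ('b, 'k) vec \<Rightarrow> ('b, 'k) vec" where
  "vsc c x = Poly_Mapping.map (\<lambda>a. c * a) x"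

definition bvec :: "'b \<Rightarrow> ('b, 'k::field) vec" where
  "bvec i = Poly_Mapping.single i 1"

definition lin_ext :: "('b \<Rightarrow> ('c, 'k::field) vec) \<Rightarrow> ('b, 'k) vec \<Rightarrow> ('c, 'k) vec" where
  "lin_ext F x = (\<Sum>p\<in>Poly_Mapping.keys x. vsc (Poly_Mapping.lookup x p) (F p))"

definition tens :: "('a, 'k::field) vec \<Rightarrow> ('c, 'k) vec \<Rightarrow> ('a \<times> 'c, 'k) vec" where
  "tens x y = (\<Sum>i\<in>Poly_Mapping.keys x. \<Sum>j\<in>Poly_Mapping.keys y. Poly_Mapping.single (i, j) (Poly_Mapping.lookup x i * Poly_Mapping.lookup y j))"

definition tmap :: "(('a, 'k::field) vec \<Rightarrow> ('c, 'k) vec) \<Rightarrow> (('d, 'k) vec \<Rightarrow> ('e, 'k) vec)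
    \<Rightarrow> ('a \<times> 'd, 'k) vec \<Rightarrow> ('c \<times> 'e, 'k) vec" where
  "tmap f g = lin_ext (\<lambda>(i, j). tens (f (bvec i)) (g (bvec j)))"

definition assoc_r :: "(('a \<times> 'b) \<times> 'c, 'k::field) vec \<Rightarrow> ('a \<times> ('b \<times> 'c), 'k) vec" where
  "assoc_r = lin_ext (\<lambda>((i, j), l). bvec (i, (j, l)))"

definition assoc_l :: "('a \<times> ('b \<times> 'c), 'k::field) vec \<Rightarrow> (('a \<times> 'b) \<times> 'c, 'k) vec" where
  "assoc_l = lin_ext (\<lambda>(i, (j, l)). bvec ((i, j), l))"

text \<open>(\<epsilon> \<otimes> \<iota>) : A \<otimes> C \<rightarrow> k \<otimes> C = C  and  (\<iota> \<otimes> \<epsilon>) : C \<otimes> A \<rightarrow> C \<otimes> k = C.\<close>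
definition eps_id :: "(('a, 'k::field) vec \<Rightarrow> 'k) \<Rightarrow> ('a \<times> 'c, 'k) vec \<Rightarrow> ('c, 'k) vec" where
  "eps_id \<epsilon> = lin_ext (\<lambda>(i, j). vsc (\<epsilon> (bvec i)) (bvec j))"

definition id_eps :: "(('a, 'k::field) vec \<Rightarrow> 'k) \<Rightarrow> ('c \<times> 'a, 'k) vec \<Rightarrow> ('c, 'k) vec" where
  "id_eps \<epsilon> = lin_ext (\<lambda>(i, j). vsc (\<epsilon> (bvec j)) (bvec i))"

definition mlin :: "(('b, 'k::field) vec \<Rightarrow> ('b, 'k) vec \<Rightarrow> ('b, 'k) vec)
    \<Rightarrow> ('b \<times> 'b, 'k) vec \<Rightarrow> ('b, 'k) vec" where
  "mlin mult = lin_ext (\<lambda>(i, j). mult (bvec i) (bvec j))"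

definition tmult :: "(('b, 'k::field) vec \<Rightarrow> ('b, 'k) vec \<Rightarrow> ('b, 'k) vec)
    \<Rightarrow> ('b \<times> 'b, 'k) vec \<Rightarrow> ('b \<times> 'b, 'k) vec \<Rightarrow> ('b \<times> 'b, 'k) vec" where
  "tmult mult x y = (\<Sum>p\<in>Poly_Mapping.keys x. \<Sum>q\<in>Poly_Mapping.keys y.
      vsc (Poly_Mapping.lookup x p * Poly_Mapping.lookup y q) (tens (mult (bvec (fst p)) (bvec (fst q))) (mult (bvec (snd p)) (bvec (snd q)))))"

definition linear_map :: "(('a, 'k::field) vec \<Rightarrow> ('c, 'k) vec) \<Rightarrow> bool" where
  "linear_map f \<longleftrightarrow> (\<forall>x y. f (x + y) = f x + f y) \<and> (\<forall>c x. f (vsc c x) = vsc c (f x))"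

definition linear_functional :: "(('a, 'k::field) vec \<Rightarrow> 'k) \<Rightarrow> bool" where
  "linear_functional f \<longleftrightarrow> (\<forall>x y. f (x + y) = f x + f y) \<and> (\<forall>c x. f (vsc c x) = c * f x)"

definition unital_algebra :: "(('b, 'k::field) vec \<Rightarrow> ('b, 'k) vec \<Rightarrow> ('b, 'k) vec) \<Rightarrow> ('b, 'k) vec \<Rightarrow> bool" where
  "unital_algebra mult one \<longleftrightarrow>
     (\<forall>a. linear_map (mult a)) \<and> (\<forall>b. linear_map (\<lambda>a. mult a b)) \<and>
     (\<forall>a b c. mult (mult a b) c = mult a (mult b c)) \<and>
     (\<forall>a. mult one a = a \<and> mult a one = a)"

definition galois_T1 where
  "galois_T1 mult one \<Delta> = lin_ext (\<lambda>(i, j). tmult mult (\<Delta> (bvec i)) (tens one (bvec j)))"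

definition galois_T2 where
  "galois_T2 mult one \<Delta> = lin_ext (\<lambda>(i, j). tmult mult (tens (bvec i) one) (\<Delta> (bvec j)))"

text \<open>Generalized multiplier Hopf coquasigroup, in the case where A has an identity
  (so M(A) = A and M(A \<otimes> A) = A \<otimes> A).\<close>
definition gen_mult_hopf_coquasigroup ::
  "(('b, 'k::field) vec \<Rightarrow> ('b, 'k) vec \<Rightarrow> ('b, 'k) vec) \<Rightarrow> ('b, 'k) vec
   \<Rightarrow> (('b, 'k) vec \<Rightarrow> ('b \<times> 'b, 'k) vec) \<Rightarrow> (('b, 'k) vec \<Rightarrow> 'k) \<Rightarrow> bool" where
  "gen_mult_hopf_coquasigroup mult one \<Delta> \<epsilon> \<longleftrightarrow>
     unital_algebra mult one \<and>
     linear_map \<Delta> \<and> (\<forall>a b. \<Delta> (mult a b) = tmult mult (\<Delta> a) (\<Delta> b)) \<and>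
     linear_functional \<epsilon> \<and>
     (\<forall>a b. eps_id \<epsilon> (galois_T1 mult one \<Delta> (tens a b)) = mult a b) \<and>
     (\<forall>a b. id_eps \<epsilon> (galois_T2 mult one \<Delta> (tens a b)) = mult a b) \<and>
     bij (galois_T1 mult one \<Delta>) \<and> bij (galois_T2 mult one \<Delta>) \<and>
     (\<forall>x. inv (galois_T1 mult one \<Delta>) x =
          tmap id (eps_id \<epsilon>) (tmap id (inv (galois_T1 mult one \<Delta>)) (assoc_r (tmap \<Delta> id x)))) \<and>
     (\<forall>x. inv (galois_T2 mult one \<Delta>) x =
          tmap (id_eps \<epsilon>) id (tmap (inv (galois_T2 mult one \<Delta>)) id (assoc_l (tmap id \<Delta> x))))"

definition is_antipode where
  "is_antipode mult one \<Delta> \<epsilon> S \<longleftrightarrow>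
     (\<forall>a b. mult (S a) b = eps_id \<epsilon> (inv (galois_T1 mult one \<Delta>) (tens a b)))"

definition hopf_coquasigroup ::
  "(('b, 'k::field) vec \<Rightarrow> ('b, 'k) vec \<Rightarrow> ('b, 'k) vec) \<Rightarrow> ('b, 'k) vec
   \<Rightarrow> (('b, 'k) vec \<Rightarrow> ('b \<times> 'b, 'k) vec) \<Rightarrow> (('b, 'k) vec \<Rightarrow> 'k)
   \<Rightarrow> (('b, 'k) vec \<Rightarrow> ('b, 'k) vec) \<Rightarrow> bool" where
  "hopf_coquasigroup mult one \<Delta> \<epsilon> S \<longleftrightarrow>
     unital_algebra mult one \<and>
     linear_map \<Delta> \<and> (\<forall>a b. \<Delta> (mult a b) = tmult mult (\<Delta> a) (\<Delta> b)) \<and> \<Delta> one = tens one one \<and>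
     linear_functional \<epsilon> \<and> (\<forall>a b. \<epsilon> (mult a b) = \<epsilon> a * \<epsilon> b) \<and> \<epsilon> one = 1 \<and>
     (\<forall>a. eps_id \<epsilon> (\<Delta> a) = a \<and> id_eps \<epsilon> (\<Delta> a) = a) \<and>
     linear_map S \<and>
     (\<forall>a. tmap (mlin mult) id (assoc_l (tmap S \<Delta> (\<Delta> a))) = tens one a) \<and>
     (\<forall>a. tmap (mlin mult) id (assoc_l (tmap id (tmap S id) (tmap id \<Delta> (\<Delta> a)))) = tens one a) \<and>
     (\<forall>a. tmap id (mlin mult) (assoc_r (tmap \<Delta> S (\<Delta> a))) = tens a one) \<and>
     (\<forall>a. tmap id (mlin mult) (assoc_r (tmap (tmap id S) id (tmap \<Delta> id (\<Delta> a)))) = tens a one)"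

end

theory Submission
  imports Defs
begin

text \<open>
  Since A has an identity, the Galois map satisfies T1((a \<otimes> 1)x) = \<Delta>(a) T1(x), so surjectivity
  of T1 forces \<Delta>(1) = 1 \<otimes> 1, and the counit conditions for T1 and T2 at b = 1 are the counit
  axioms; multiplicativity of \<epsilon> follows from (\<epsilon> \<otimes> \<iota>)(\<Delta>(a)x) = a (\<epsilon> \<otimes> \<iota>)(x).
  The recursive formula for T1\<inverse> together with the defining property of S gives
  T1\<inverse>(a \<otimes> b) = a_(1) \<otimes> S(a_(2)) b.  Hence T1(a_(1) \<otimes> S(a_(2))) = a \<otimes> 1 and
  T1\<inverse>(\<Delta> a) = a \<otimes> 1, which are the two right antipode axioms.  The mirror argument for T2
  gives the two left axioms for S'(c) = (\<iota> \<otimes> \<epsilon>) T2\<inverse>(1 \<otimes> c).  Finally, \<epsilon> \<otimes> \<iota> applied to the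
  first right axiom gives a_(1) S(a_(2)) = \<epsilon>(a) 1, and with this, m(\<iota> \<otimes> S) applied to the first
  left axiom shows S' = S.
\<close>

notation tens (infixr "\<otimes>" 72)

section \<open>Linear maps between free vector spaces\<close>

lemma lookup_vsc [simp]: "Poly_Mapping.lookup (vsc c x) p = c * Poly_Mapping.lookup x p"
  by (simp add: vsc_def Poly_Mapping.map.rep_eq when_def)

lemma lookup_bvec: "Poly_Mapping.lookup (bvec i) p = (if p = i then 1 else 0)"
  by (simp add: bvec_def lookup_single when_def)

lemma vsc_add_right: "vsc c (x + y) = vsc c x + vsc c y"
  by (rule poly_mapping_eqI) (simp add: lookup_add algebra_simps)

lemma vsc_add_left: "vsc (c + d) x = vsc c x + vsc d x"
  by (rule poly_mapping_eqI) (simp add: lookup_add algebra_simps)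

lemma vsc_vsc: "vsc c (vsc d x) = vsc (c * d) x"
  by (rule poly_mapping_eqI) simp

lemma vsc_zero [simp]: "vsc 0 x = 0" "vsc c 0 = 0"
  by (rule poly_mapping_eqI, simp)+

lemma vsc_one [simp]: "vsc 1 x = x"
  by (rule poly_mapping_eqI) simp

lemma vsc_sum: "vsc c (sum f A) = (\<Sum>a\<in>A. vsc c (f a))"
  by (rule poly_mapping_eqI) (simp add: lookup_sum sum_distrib_left)

lemma vsc_right_cancel:
  assumes "x \<noteq> 0" "vsc c x = vsc d x"
  shows "c = d"
proof -
  obtain p where p: "Poly_Mapping.lookup x p \<noteq> 0"
    using assms(1) by (metis poly_mapping_eqI lookup_zero)
  have "c * Poly_Mapping.lookup x p = d * Poly_Mapping.lookup x p"
    using assms(2) by (metis lookup_vsc)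
  then show "c = d" using p by simp
qed

lemma bvec_nonzero: "bvec i \<noteq> 0"
  by (metis lookup_bvec lookup_zero zero_neq_one)

lemma lin_ext_eq_sum_superset:
  assumes "finite K" "Poly_Mapping.keys x \<subseteq> K"
  shows "lin_ext F x = (\<Sum>p\<in>K. vsc (Poly_Mapping.lookup x p) (F p))"
  unfolding lin_ext_def
  by (rule sum.mono_neutral_left) (use assms in \<open>auto simp: in_keys_iff\<close>)

lemma lin_ext_add: "lin_ext F (x + y) = lin_ext F x + lin_ext F y"
proof -
  let ?K = "Poly_Mapping.keys x \<union> Poly_Mapping.keys y \<union> Poly_Mapping.keys (x + y)"
  have "lin_ext F (x + y) = (\<Sum>p\<in>?K. vsc (Poly_Mapping.lookup (x + y) p) (F p))"
    by (rule lin_ext_eq_sum_superset) auto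
  also have "\<dots> = (\<Sum>p\<in>?K. vsc (Poly_Mapping.lookup x p) (F p))
                 + (\<Sum>p\<in>?K. vsc (Poly_Mapping.lookup y p) (F p))"
    by (simp add: lookup_add vsc_add_left sum.distrib)
  also have "\<dots> = lin_ext F x + lin_ext F y"
    by (subst (1 2) lin_ext_eq_sum_superset[of ?K]) auto
  finally show ?thesis .
qed

lemma lin_ext_vsc: "lin_ext F (vsc c x) = vsc c (lin_ext F x)"
proof -
  have "lin_ext F (vsc c x) = (\<Sum>p\<in>Poly_Mapping.keys x. vsc (Poly_Mapping.lookup (vsc c x) p) (F p))"
    by (rule lin_ext_eq_sum_superset) (auto simp: in_keys_iff)
  then show ?thesis
    by (simp add: lin_ext_def vsc_sum vsc_vsc)
qed

lemma linear_map_lin_ext [simp]: "linear_map (lin_ext F)"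
  by (simp add: linear_map_def lin_ext_add lin_ext_vsc)

lemma lin_ext_bvec: "lin_ext bvec x = x"
proof (rule poly_mapping_eqI)
  fix q
  have "Poly_Mapping.lookup (lin_ext bvec x) q
      = (\<Sum>p\<in>Poly_Mapping.keys x. Poly_Mapping.lookup x p * (if q = p then 1 else 0))"
    by (simp add: lin_ext_def lookup_sum lookup_bvec)
  also have "\<dots> = Poly_Mapping.lookup x q"
    by (simp add: if_distrib in_keys_iff cong: if_cong)
  finally show "Poly_Mapping.lookup (lin_ext bvec x) q = Poly_Mapping.lookup x q" .
qed

lemma linear_map_zero: "linear_map f \<Longrightarrow> f 0 = 0"
  unfolding linear_map_def by (metis vsc_zero(1))

lemma linear_map_sum: "linear_map f \<Longrightarrow> f (sum g A) = (\<Sum>a\<in>A. f (g a))"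
  by (induction A rule: infinite_finite_induct) (auto simp: linear_map_zero linear_map_def)

lemma lin_ext_compose: "linear_map h \<Longrightarrow> lin_ext (\<lambda>j. h (F j)) x = h (lin_ext F x)"
  by (simp add: lin_ext_def linear_map_sum) (simp add: linear_map_def)

lemma lin_ext_linear_map: "linear_map f \<Longrightarrow> lin_ext (\<lambda>j. f (bvec j)) x = f x"
  using lin_ext_compose[of f bvec x] by (simp add: lin_ext_bvec)

lemma linear_map_eqI:
  assumes "linear_map f" "linear_map g" "\<And>i. f (bvec i) = g (bvec i)"
  shows "f = g"
proof
  fix x
  show "f x = g x"
    using lin_ext_linear_map[OF assms(1), of x] lin_ext_linear_map[OF assms(2), of x] assms(3)
    by simp
qed

text \<open>Identities between linear maps are stated with \<open>\<circ>\<close> and checked on pure tensors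
  (linear_map_eq_on_tens); in that form this simp rule discharges the linearity side conditions.\<close>
lemma linear_map_comp [simp]: "linear_map f \<Longrightarrow> linear_map g \<Longrightarrow> linear_map (f \<circ> g)"
  by (simp add: linear_map_def)

lemma linear_map_id [simp]: "linear_map id"
  by (simp add: linear_map_def)

lemma linear_map_vsc [simp]: "linear_map (vsc c)"
  by (simp add: linear_map_def vsc_add_right vsc_vsc mult.commute)

lemma linear_map_vsc_functional:
  "linear_functional e \<Longrightarrow> linear_map (\<lambda>x. vsc (e x) v)"
  by (simp add: linear_functional_def linear_map_def vsc_add_left vsc_vsc)

lemma linear_map_inv:
  assumes "linear_map f" "bij f"
  shows "linear_map (inv f)"
proof -
  have f_inv: "f (inv f x) = x" for x
    using assms(2) by (simp add: bij_is_surj surj_f_inv_f)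
  have "inj f"
    using assms(2) bij_is_inj by blast
  moreover have "f (inv f x + inv f y) = f (inv f (x + y))" for x y
    using assms(1) by (simp add: linear_map_def f_inv)
  moreover have "f (vsc c (inv f x)) = f (inv f (vsc c x))" for c x
    using assms(1) by (simp add: linear_map_def f_inv)
  ultimately show ?thesis
    unfolding linear_map_def by (metis injD)
qed

lemma linear_map_lin_ext_param:
  assumes "\<And>p. linear_map (G p)"
  shows "linear_map (\<lambda>y. lin_ext (\<lambda>p. G p y) x)"
  using assms unfolding lin_ext_def linear_map_def
  by (simp add: vsc_add_right sum.distrib vsc_sum vsc_vsc mult.commute)

section \<open>Tensor products\<close>

lemma lookup_tens:
  "Poly_Mapping.lookup (x \<otimes> y) p = Poly_Mapping.lookup x (fst p) * Poly_Mapping.lookup y (snd p)"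
proof -
  obtain i j where p: "p = (i, j)" by fastforce
  have "Poly_Mapping.lookup (x \<otimes> y) (i, j)
      = (\<Sum>i'\<in>Poly_Mapping.keys x. \<Sum>j'\<in>Poly_Mapping.keys y.
           if i' = i \<and> j' = j then Poly_Mapping.lookup x i' * Poly_Mapping.lookup y j' else 0)"
    by (simp add: tens_def lookup_sum lookup_single when_def)
  also have "\<dots> = (\<Sum>i'\<in>Poly_Mapping.keys x. if i' = i then
                 (\<Sum>j'\<in>Poly_Mapping.keys y. if j' = j
                    then Poly_Mapping.lookup x i' * Poly_Mapping.lookup y j' else 0) else 0)"
    by (rule sum.cong) auto
  also have "\<dots> = Poly_Mapping.lookup x i * Poly_Mapping.lookup y j"
    by (simp add: in_keys_iff)
  finally show ?thesis
    by (simp add: p)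
qed

lemma keys_tens: "Poly_Mapping.keys (x \<otimes> y) \<subseteq> Poly_Mapping.keys x \<times> Poly_Mapping.keys y"
  by (auto simp: in_keys_iff lookup_tens)

lemma lin_ext_tens: "lin_ext F (x \<otimes> y) = lin_ext (\<lambda>i. lin_ext (\<lambda>j. F (i, j)) y) x"
proof -
  have "lin_ext F (x \<otimes> y)
      = (\<Sum>p\<in>Poly_Mapping.keys x \<times> Poly_Mapping.keys y. vsc (Poly_Mapping.lookup (x \<otimes> y) p) (F p))"
    by (rule lin_ext_eq_sum_superset) (auto simp: keys_tens)
  then show ?thesis
    by (simp add: sum.cartesian_product lookup_tens case_prod_beta lin_ext_def vsc_sum vsc_vsc)
qed

lemma bvec_pair: "bvec (i, j) = bvec i \<otimes> bvec j"
  by (rule poly_mapping_eqI) (auto simp: lookup_tens lookup_bvec)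

lemma tens_add_left: "(x + y) \<otimes> z = x \<otimes> z + y \<otimes> z"
  by (rule poly_mapping_eqI) (simp add: lookup_tens lookup_add algebra_simps)

lemma tens_add_right: "z \<otimes> (x + y) = z \<otimes> x + z \<otimes> y"
  by (rule poly_mapping_eqI) (simp add: lookup_tens lookup_add algebra_simps)

lemma tens_vsc_left: "vsc c x \<otimes> z = vsc c (x \<otimes> z)"
  by (rule poly_mapping_eqI) (simp add: lookup_tens algebra_simps)

lemma tens_vsc_right: "z \<otimes> vsc c x = vsc c (z \<otimes> x)"
  by (rule poly_mapping_eqI) (simp add: lookup_tens algebra_simps)

lemma linear_map_tens_left [simp]: "linear_map (\<lambda>x. x \<otimes> z)"
  by (simp add: linear_map_def tens_add_left tens_vsc_left)

lemma linear_map_tens_right [simp]: "linear_map (tens z)"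
  by (simp add: linear_map_def tens_add_right tens_vsc_right)

lemma linear_map_eq_on_tens:
  assumes "linear_map f" "linear_map g" "\<And>x y. f (x \<otimes> y) = g (x \<otimes> y)"
  shows "f = g"
  by (rule linear_map_eqI[OF assms(1,2)]) (auto simp: bvec_pair assms(3))

lemma linear_functional_eq_on_tens:
  assumes "linear_functional f" "linear_functional g" "\<And>x y. f (x \<otimes> y) = g (x \<otimes> y)"
  shows "f = g"
proof
  fix w
  have "(\<lambda>w. vsc (f w) (bvec ())) = (\<lambda>w. vsc (g w) (bvec ()))"
    using assms by (intro linear_map_eq_on_tens linear_map_vsc_functional) auto
  then show "f w = g w"
    by (meson bvec_nonzero vsc_right_cancel)
qed

lemma lin_ext_tens_const_left: "lin_ext (\<lambda>j. z \<otimes> F j) x = z \<otimes> lin_ext F x"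
  by (rule lin_ext_compose) simp

lemma lin_ext_tens_const_right: "lin_ext (\<lambda>j. F j \<otimes> z) x = lin_ext F x \<otimes> z"
  by (rule lin_ext_compose[of "\<lambda>v. v \<otimes> z"]) simp

lemma tmap_tens:
  assumes "linear_map f" "linear_map g"
  shows "tmap f g (x \<otimes> y) = f x \<otimes> g y"
  by (simp add: tmap_def lin_ext_tens lin_ext_tens_const_left lin_ext_tens_const_right
      lin_ext_linear_map[OF assms(1)] lin_ext_linear_map[OF assms(2)])

lemma linear_map_tmap [simp]: "linear_map (tmap f g)"
  by (simp add: tmap_def)

lemma assoc_r_tens: "assoc_r ((x \<otimes> y) \<otimes> z) = x \<otimes> y \<otimes> z"
  by (simp add: assoc_r_def lin_ext_tens bvec_pair lin_ext_tens_const_left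
      lin_ext_tens_const_right lin_ext_bvec)

lemma assoc_l_tens: "assoc_l (x \<otimes> y \<otimes> z) = (x \<otimes> y) \<otimes> z"
  by (simp add: assoc_l_def lin_ext_tens bvec_pair lin_ext_tens_const_left
      lin_ext_tens_const_right lin_ext_bvec)

lemma linear_map_assoc [simp]: "linear_map assoc_r" "linear_map assoc_l"
  by (simp_all add: assoc_r_def assoc_l_def)

lemma eps_id_tens: "linear_functional e \<Longrightarrow> eps_id e (x \<otimes> y) = vsc (e x) y"
  by (simp add: eps_id_def lin_ext_tens lin_ext_compose lin_ext_bvec
      lin_ext_linear_map[OF linear_map_vsc_functional])

lemma id_eps_tens: "linear_functional e \<Longrightarrow> id_eps e (x \<otimes> y) = vsc (e y) x"
  by (simp add: id_eps_def lin_ext_tens lin_ext_compose lin_ext_bvec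
      lin_ext_linear_map[OF linear_map_vsc_functional])

lemma linear_map_eps_id [simp]: "linear_map (eps_id e)"
  by (simp add: eps_id_def)

lemma linear_map_id_eps [simp]: "linear_map (id_eps e)"
  by (simp add: id_eps_def)

lemma linear_functional_comp:
  "linear_functional e \<Longrightarrow> linear_map g \<Longrightarrow> linear_functional (e \<circ> g)"
  by (simp add: linear_map_def linear_functional_def)

text \<open>Both sides are (e \<otimes> e)(w).\<close>
lemma functional_eps_id_eq_id_eps:
  assumes "linear_functional e"
  shows "e (eps_id e w) = e (id_eps e w)"
proof -
  have "e \<circ> eps_id e = e \<circ> id_eps e"
  proof (rule linear_functional_eq_on_tens)
    fix x y
    show "(e \<circ> eps_id e) (x \<otimes> y) = (e \<circ> id_eps e) (x \<otimes> y)"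
      using assms by (simp add: eps_id_tens id_eps_tens linear_functional_def mult.commute)
  qed (simp_all add: assms linear_functional_comp)
  then show ?thesis
    by (simp add: fun_eq_iff)
qed

section \<open>The algebra A \<otimes> A\<close>

locale unital_alg =
  fixes mult :: "('b, 'k::field) vec \<Rightarrow> ('b, 'k) vec \<Rightarrow> ('b, 'k) vec"  (infixl "\<cdot>" 75)
    and one :: "('b, 'k) vec"
  assumes unital_algebra: "unital_algebra mult one"
begin

abbreviation tprod :: "('b \<times> 'b, 'k) vec \<Rightarrow> ('b \<times> 'b, 'k) vec \<Rightarrow> ('b \<times> 'b, 'k) vec"
    (infixl "\<odot>" 70)
  where "x \<odot> y \<equiv> tmult mult x y"

lemma linear_map_mult_left [simp]: "linear_map (mult a)"
  using unital_algebra by (simp add: unital_algebra_def)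

lemma linear_map_mult_right [simp]: "linear_map (\<lambda>a. a \<cdot> b)"
  using unital_algebra by (simp add: unital_algebra_def)

lemma m_assoc: "a \<cdot> b \<cdot> c = a \<cdot> (b \<cdot> c)"
  using unital_algebra by (simp add: unital_algebra_def)

lemma l_one [simp]: "one \<cdot> a = a"
  using unital_algebra by (simp add: unital_algebra_def)

lemma r_one [simp]: "a \<cdot> one = a"
  using unital_algebra by (simp add: unital_algebra_def)

lemma mult_vsc_left: "vsc c x \<cdot> y = vsc c (x \<cdot> y)"
  using linear_map_mult_right[of y] unfolding linear_map_def by blast

lemma mult_vsc_right: "x \<cdot> vsc c y = vsc c (x \<cdot> y)"
  using linear_map_mult_left[of x] unfolding linear_map_def by blast

lemma one_not_zero: "one \<noteq> 0"
  by (metis bvec_nonzero l_one linear_map_mult_right linear_map_zero)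

lemma mlin_tens [simp]: "mlin mult (x \<otimes> y) = x \<cdot> y"
  by (simp add: mlin_def lin_ext_tens lin_ext_linear_map[OF linear_map_mult_left]
      lin_ext_linear_map[OF linear_map_mult_right])

lemma linear_map_mlin [simp]: "linear_map (mlin mult)"
  by (simp add: mlin_def)

lemma tmult_eq_lin_ext:
  "x \<odot> y = lin_ext (\<lambda>p. lin_ext (\<lambda>q.
      (bvec (fst p) \<cdot> bvec (fst q)) \<otimes> (bvec (snd p) \<cdot> bvec (snd q))) y) x"
  by (simp add: tmult_def lin_ext_def vsc_sum vsc_vsc)

lemma linear_map_tmult_left [simp]: "linear_map (\<lambda>x. x \<odot> y)"
  by (simp add: tmult_eq_lin_ext)

lemma linear_map_tmult_right [simp]: "linear_map (tmult mult x)"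
  unfolding tmult_eq_lin_ext by (rule linear_map_lin_ext_param) simp

lemma tmult_tens [simp]: "(a \<otimes> b) \<odot> (c \<otimes> d) = (a \<cdot> c) \<otimes> (b \<cdot> d)"
  by (simp add: tmult_eq_lin_ext lin_ext_tens lin_ext_tens_const_left lin_ext_tens_const_right
      lin_ext_linear_map[OF linear_map_mult_left] lin_ext_linear_map[OF linear_map_mult_right])

lemma tmult_assoc: "x \<odot> y \<odot> z = x \<odot> (y \<odot> z)"
proof -
  have pure_xy: "((a \<cdot> c) \<otimes> (b \<cdot> d)) \<odot> z = (a \<otimes> b) \<odot> ((c \<otimes> d) \<odot> z)" for a b c d z
  proof -
    have "tmult mult ((a \<cdot> c) \<otimes> (b \<cdot> d)) = tmult mult (a \<otimes> b) \<circ> tmult mult (c \<otimes> d)"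
      by (rule linear_map_eq_on_tens) (simp_all add: m_assoc)
    then show ?thesis
      by (simp add: fun_eq_iff)
  qed
  have pure_x: "(a \<otimes> b) \<odot> y \<odot> z = (a \<otimes> b) \<odot> (y \<odot> z)" for a b y z
  proof -
    have "(\<lambda>v. v \<odot> z) \<circ> tmult mult (a \<otimes> b) = tmult mult (a \<otimes> b) \<circ> (\<lambda>v. v \<odot> z)"
      by (rule linear_map_eq_on_tens) (simp_all add: pure_xy)
    then show ?thesis
      by (simp add: fun_eq_iff)
  qed
  have "(\<lambda>v. v \<odot> z) \<circ> (\<lambda>v. v \<odot> y) = (\<lambda>v. v \<odot> (y \<odot> z))"
    by (rule linear_map_eq_on_tens) (simp_all add: pure_x)
  then show ?thesis
    by (simp add: fun_eq_iff)
qed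

lemma tmult_one_left [simp]: "(one \<otimes> one) \<odot> x = x"
proof -
  have "tmult mult (one \<otimes> one) = id"
    by (rule linear_map_eq_on_tens) simp_all
  then show ?thesis
    by simp
qed

lemma tmult_one_right [simp]: "x \<odot> (one \<otimes> one) = x"
proof -
  have "(\<lambda>x. x \<odot> (one \<otimes> one)) = id"
    by (rule linear_map_eq_on_tens) simp_all
  then show ?thesis
    by (simp add: fun_eq_iff)
qed

lemma lin_ext_tmult_const_left: "lin_ext (\<lambda>j. x \<odot> F j) y = x \<odot> lin_ext F y"
  by (rule lin_ext_compose) simp

lemma lin_ext_tmult_const_right: "lin_ext (\<lambda>j. F j \<odot> x) y = lin_ext F y \<odot> x"
  by (rule lin_ext_compose[of "\<lambda>v. v \<odot> x"]) simp

lemma mlin_tmult_left: "mlin mult ((z \<otimes> one) \<odot> w) = z \<cdot> mlin mult w"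
proof -
  have "mlin mult \<circ> tmult mult (z \<otimes> one) = mult z \<circ> mlin mult"
    by (rule linear_map_eq_on_tens) (simp_all add: m_assoc)
  then show ?thesis
    by (simp add: fun_eq_iff)
qed

lemma tmap_id_tmult_left:
  assumes "linear_map f"
  shows "tmap id f ((z \<otimes> one) \<odot> w) = (z \<otimes> one) \<odot> tmap id f w"
proof -
  have "tmap id f \<circ> tmult mult (z \<otimes> one) = tmult mult (z \<otimes> one) \<circ> tmap id f"
    by (rule linear_map_eq_on_tens) (simp_all add: assms tmap_tens)
  then show ?thesis
    by (simp add: fun_eq_iff)
qed

lemma id_eps_tmult_left:
  assumes "linear_functional e"
  shows "id_eps e ((x \<otimes> one) \<odot> v) = x \<cdot> id_eps e v"
proof -
  have "id_eps e \<circ> tmult mult (x \<otimes> one) = mult x \<circ> id_eps e"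
    by (rule linear_map_eq_on_tens) (simp_all add: assms id_eps_tens mult_vsc_right)
  then show ?thesis
    by (simp add: fun_eq_iff)
qed

lemma id_eps_tmult_right:
  assumes "linear_functional e"
  shows "id_eps e (w \<odot> (b \<otimes> one)) = id_eps e w \<cdot> b"
proof -
  have "id_eps e \<circ> (\<lambda>w. w \<odot> (b \<otimes> one)) = (\<lambda>a. a \<cdot> b) \<circ> id_eps e"
    by (rule linear_map_eq_on_tens) (simp_all add: assms id_eps_tens mult_vsc_left)
  then show ?thesis
    by (simp add: fun_eq_iff)
qed

lemma tmap_id_mlin_assoc_r: "tmap id (mlin mult) (assoc_r (w \<otimes> z)) = w \<odot> (one \<otimes> z)"
proof -
  have "tmap id (mlin mult) \<circ> assoc_r \<circ> (\<lambda>w. w \<otimes> z) = (\<lambda>w. w \<odot> (one \<otimes> z))"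
    by (rule linear_map_eq_on_tens) (simp_all add: assoc_r_tens tmap_tens)
  then show ?thesis
    by (simp add: fun_eq_iff)
qed

lemma tmap_mlin_id_assoc_l: "tmap (mlin mult) id (assoc_l (z \<otimes> w)) = (z \<otimes> one) \<odot> w"
proof -
  have "tmap (mlin mult) id \<circ> assoc_l \<circ> tens z = tmult mult (z \<otimes> one)"
    by (rule linear_map_eq_on_tens) (simp_all add: assoc_l_tens tmap_tens)
  then show ?thesis
    by (simp add: fun_eq_iff)
qed

lemma tmap_id_mult_right:
  assumes "linear_map f"
  shows "tmap id (\<lambda>c. f c \<cdot> y) w = tmap id f w \<odot> (one \<otimes> y)"
proof -
  have "linear_map (\<lambda>c. f c \<cdot> y)"
    using linear_map_comp[OF linear_map_mult_right assms] by (simp add: comp_def)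
  then have "tmap id (\<lambda>c. f c \<cdot> y) = (\<lambda>w. w \<odot> (one \<otimes> y)) \<circ> tmap id f"
    by (intro linear_map_eq_on_tens) (simp_all add: assms tmap_tens)
  then show ?thesis
    by (simp add: fun_eq_iff)
qed

lemma tmap_mult_left_id:
  assumes "linear_map f"
  shows "tmap (\<lambda>c. x \<cdot> f c) id w = (x \<otimes> one) \<odot> tmap f id w"
proof -
  have "linear_map (\<lambda>c. x \<cdot> f c)"
    using linear_map_comp[OF linear_map_mult_left assms] by (simp add: comp_def)
  then have "tmap (\<lambda>c. x \<cdot> f c) id = tmult mult (x \<otimes> one) \<circ> tmap f id"
    by (intro linear_map_eq_on_tens) (simp_all add: assms tmap_tens)
  then show ?thesis
    by (simp add: fun_eq_iff)
qed

end

section \<open>Counit and comultiplication\<close>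

locale gmh_coquasigroup =
  fixes mult :: "('b, 'k::field) vec \<Rightarrow> ('b, 'k) vec \<Rightarrow> ('b, 'k) vec"  (infixl "\<cdot>" 75)
    and one :: "('b, 'k) vec"
    and \<Delta> :: "('b, 'k) vec \<Rightarrow> ('b \<times> 'b, 'k) vec"
    and \<epsilon> :: "('b, 'k) vec \<Rightarrow> 'k"
  assumes gen_mult_hopf_coquasigroup: "gen_mult_hopf_coquasigroup mult one \<Delta> \<epsilon>"

sublocale gmh_coquasigroup \<subseteq> unital_alg
  using gen_mult_hopf_coquasigroup by unfold_locales (simp add: gen_mult_hopf_coquasigroup_def)

context gmh_coquasigroup
begin

abbreviation "T1 \<equiv> galois_T1 mult one \<Delta>"
abbreviation "T2 \<equiv> galois_T2 mult one \<Delta>"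

lemma linear_map_Delta [simp]: "linear_map \<Delta>"
  using gen_mult_hopf_coquasigroup by (simp add: gen_mult_hopf_coquasigroup_def)

lemma Delta_mult: "\<Delta> (a \<cdot> b) = \<Delta> a \<odot> \<Delta> b"
  using gen_mult_hopf_coquasigroup by (simp add: gen_mult_hopf_coquasigroup_def)

lemma linear_functional_eps: "linear_functional \<epsilon>"
  using gen_mult_hopf_coquasigroup by (simp add: gen_mult_hopf_coquasigroup_def)

lemma eps_id_T1_tens: "eps_id \<epsilon> (T1 (a \<otimes> b)) = a \<cdot> b"
  using gen_mult_hopf_coquasigroup by (simp add: gen_mult_hopf_coquasigroup_def)

lemma id_eps_T2_tens: "id_eps \<epsilon> (T2 (a \<otimes> b)) = a \<cdot> b"
  using gen_mult_hopf_coquasigroup by (simp add: gen_mult_hopf_coquasigroup_def)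

lemma bij_T1: "bij T1" and bij_T2: "bij T2"
  using gen_mult_hopf_coquasigroup by (simp_all add: gen_mult_hopf_coquasigroup_def)

lemma inv_T1_eq: "inv T1 x = tmap id (eps_id \<epsilon>) (tmap id (inv T1) (assoc_r (tmap \<Delta> id x)))"
  using gen_mult_hopf_coquasigroup by (simp add: gen_mult_hopf_coquasigroup_def)

lemma inv_T2_eq: "inv T2 x = tmap (id_eps \<epsilon>) id (tmap (inv T2) id (assoc_l (tmap id \<Delta> x)))"
  using gen_mult_hopf_coquasigroup by (simp add: gen_mult_hopf_coquasigroup_def)

lemma T1_tens: "T1 (a \<otimes> b) = \<Delta> a \<odot> (one \<otimes> b)"
  by (simp add: galois_T1_def lin_ext_tens lin_ext_tmult_const_left lin_ext_tmult_const_right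
      lin_ext_tens_const_left lin_ext_bvec lin_ext_linear_map[OF linear_map_Delta])

lemma T2_tens: "T2 (a \<otimes> b) = (a \<otimes> one) \<odot> \<Delta> b"
  by (simp add: galois_T2_def lin_ext_tens lin_ext_tmult_const_left lin_ext_tmult_const_right
      lin_ext_tens_const_right lin_ext_bvec lin_ext_linear_map[OF linear_map_Delta])

lemma linear_map_T [simp]: "linear_map T1" "linear_map T2"
  by (simp_all add: galois_T1_def galois_T2_def)

lemma linear_map_inv_T [simp]: "linear_map (inv T1)" "linear_map (inv T2)"
  by (simp_all add: linear_map_inv bij_T1 bij_T2)

lemma T1_inv_T1 [simp]: "T1 (inv T1 x) = x" "inv T1 (T1 x) = x"
  using bij_T1 by (simp_all add: bij_is_surj surj_f_inv_f bij_is_inj)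

lemma T2_inv_T2 [simp]: "T2 (inv T2 x) = x" "inv T2 (T2 x) = x"
  using bij_T2 by (simp_all add: bij_is_surj surj_f_inv_f bij_is_inj)

lemma T1_tmult_left: "T1 ((a \<otimes> one) \<odot> x) = \<Delta> a \<odot> T1 x"
proof -
  have "T1 \<circ> tmult mult (a \<otimes> one) = tmult mult (\<Delta> a) \<circ> T1"
    by (rule linear_map_eq_on_tens) (simp_all add: T1_tens Delta_mult tmult_assoc)
  then show ?thesis
    by (simp add: fun_eq_iff)
qed

lemma T2_tmult_left: "T2 ((x \<otimes> one) \<odot> v) = (x \<otimes> one) \<odot> T2 v"
proof -
  have "T2 \<circ> tmult mult (x \<otimes> one) = tmult mult (x \<otimes> one) \<circ> T2"
    by (rule linear_map_eq_on_tens) (simp_all add: T2_tens tmult_assoc[symmetric])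
  then show ?thesis
    by (simp add: fun_eq_iff)
qed

lemma Delta_one: "\<Delta> one = one \<otimes> one"
proof -
  have "\<Delta> one = \<Delta> one \<odot> T1 (inv T1 (one \<otimes> one))"
    by simp
  also have "\<dots> = T1 ((one \<otimes> one) \<odot> inv T1 (one \<otimes> one))"
    by (simp only: T1_tmult_left)
  also have "\<dots> = one \<otimes> one"
    by simp
  finally show ?thesis .
qed

lemma T1_tens_one: "T1 (a \<otimes> one) = \<Delta> a"
  by (simp add: T1_tens)

lemma T2_one_tens: "T2 (one \<otimes> a) = \<Delta> a"
  by (simp add: T2_tens)

lemma counit_left: "eps_id \<epsilon> (\<Delta> a) = a"
  using eps_id_T1_tens[of a one] by (simp add: T1_tens_one)

lemma counit_right: "id_eps \<epsilon> (\<Delta> a) = a"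
  using id_eps_T2_tens[of one a] by (simp add: T2_one_tens)

lemma eps_id_T1: "eps_id \<epsilon> (T1 u) = mlin mult u"
proof -
  have "eps_id \<epsilon> \<circ> T1 = mlin mult"
    by (rule linear_map_eq_on_tens) (simp_all add: eps_id_T1_tens)
  then show ?thesis
    by (simp add: fun_eq_iff)
qed

lemma eps_id_Delta_tmult: "eps_id \<epsilon> (\<Delta> a \<odot> x) = a \<cdot> eps_id \<epsilon> x"
proof -
  have "eps_id \<epsilon> (\<Delta> a \<odot> x) = eps_id \<epsilon> (T1 ((a \<otimes> one) \<odot> inv T1 x))"
    by (simp add: T1_tmult_left)
  also have "\<dots> = a \<cdot> mlin mult (inv T1 x)"
    by (simp add: eps_id_T1 mlin_tmult_left)
  also have "\<dots> = a \<cdot> eps_id \<epsilon> x"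
    by (metis T1_inv_T1(1) eps_id_T1)
  finally show ?thesis .
qed

lemma eps_one: "\<epsilon> one = 1"
proof -
  have "vsc (\<epsilon> one) one = vsc 1 one"
    using counit_left[of one] by (simp add: Delta_one eps_id_tens[OF linear_functional_eps])
  then show ?thesis
    using vsc_right_cancel one_not_zero by blast
qed

lemma eps_mult: "\<epsilon> (a \<cdot> b) = \<epsilon> a * \<epsilon> b"
proof -
  have "\<epsilon> (a \<cdot> b) = \<epsilon> (id_eps \<epsilon> (\<Delta> a \<odot> (b \<otimes> one)))"
    by (simp add: id_eps_tmult_right linear_functional_eps counit_right)
  also have "\<dots> = \<epsilon> (eps_id \<epsilon> (\<Delta> a \<odot> (b \<otimes> one)))"
    by (simp add: functional_eps_id_eq_id_eps linear_functional_eps)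
  also have "\<dots> = \<epsilon> a * \<epsilon> b"
    using linear_functional_eps
    by (simp add: eps_id_Delta_tmult eps_id_tens mult_vsc_right linear_functional_def)
  finally show ?thesis .
qed

lemma T1_tmap_id:
  assumes "linear_map f"
  shows "T1 (tmap id f u) = tmap id (mlin mult) (assoc_r (tmap \<Delta> f u))"
proof -
  have "T1 \<circ> tmap id f = tmap id (mlin mult) \<circ> assoc_r \<circ> tmap \<Delta> f"
    by (rule linear_map_eq_on_tens) (simp_all add: assms tmap_tens T1_tens tmap_id_mlin_assoc_r)
  then show ?thesis
    by (simp add: fun_eq_iff)
qed

lemma T2_tmap_id:
  assumes "linear_map f"
  shows "T2 (tmap f id u) = tmap (mlin mult) id (assoc_l (tmap f \<Delta> u))"
proof -
  have "T2 \<circ> tmap f id = tmap (mlin mult) id \<circ> assoc_l \<circ> tmap f \<Delta>"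
    by (rule linear_map_eq_on_tens) (simp_all add: assms tmap_tens T2_tens tmap_mlin_id_assoc_l)
  then show ?thesis
    by (simp add: fun_eq_iff)
qed

section \<open>The antipode\<close>

definition antipode_T2 :: "('b, 'k) vec \<Rightarrow> ('b, 'k) vec"
  where "antipode_T2 = id_eps \<epsilon> \<circ> inv T2 \<circ> tens one"

lemma linear_map_antipode_T2 [simp]: "linear_map antipode_T2"
  by (simp add: antipode_T2_def)

lemma id_eps_inv_T2_tens: "id_eps \<epsilon> (inv T2 (x \<otimes> c)) = x \<cdot> antipode_T2 c"
proof -
  have "T2 ((x \<otimes> one) \<odot> inv T2 (one \<otimes> c)) = x \<otimes> c"
    by (simp add: T2_tmult_left)
  then have "inv T2 (x \<otimes> c) = (x \<otimes> one) \<odot> inv T2 (one \<otimes> c)"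
    by (metis T2_inv_T2(2))
  then show ?thesis
    by (simp add: id_eps_tmult_left linear_functional_eps antipode_T2_def)
qed

lemma inv_T2_tens: "inv T2 (a \<otimes> b) = tmap (\<lambda>c. a \<cdot> antipode_T2 c) id (\<Delta> b)"
proof -
  have "linear_map (\<lambda>c. a \<cdot> antipode_T2 c)"
    using linear_map_comp[of "mult a" antipode_T2] by (simp add: comp_def)
  \<comment> \<open>without the type constraint, \<open>id\<close> would leave the second tensor factor polymorphic\<close>
  then have "tmap (id_eps \<epsilon>) id \<circ> tmap (inv T2) id \<circ> assoc_l \<circ> tens a
      = (tmap (\<lambda>c. a \<cdot> antipode_T2 c) id :: ('b \<times> 'b, 'k) vec \<Rightarrow> _)"
    by (intro linear_map_eq_on_tens) (simp_all add: assoc_l_tens tmap_tens id_eps_inv_T2_tens)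
  then have "tmap (id_eps \<epsilon>) id (tmap (inv T2) id (assoc_l (a \<otimes> \<Delta> b)))
      = tmap (\<lambda>c. a \<cdot> antipode_T2 c) id (\<Delta> b)"
    by (simp add: fun_eq_iff)
  then show ?thesis
    by (subst inv_T2_eq) (simp add: tmap_tens)
qed

lemma T2_tmap_antipode_T2_Delta: "T2 (tmap antipode_T2 id (\<Delta> a)) = one \<otimes> a"
proof -
  have "inv T2 (one \<otimes> a) = tmap antipode_T2 id (\<Delta> a)"
    using inv_T2_tens[of one a] by simp
  then show ?thesis
    by (metis T2_inv_T2(1))
qed

lemma antipode_T2_left_1: "tmap (mlin mult) id (assoc_l (tmap antipode_T2 \<Delta> (\<Delta> a))) = one \<otimes> a"
  using T2_tmap_antipode_T2_Delta by (simp add: T2_tmap_id)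

lemma antipode_T2_left_2:
  "tmap (mlin mult) id (assoc_l (tmap id (tmap antipode_T2 id) (tmap id \<Delta> (\<Delta> a)))) = one \<otimes> a"
proof -
  have "inv T2 = tmap (mlin mult) id \<circ> assoc_l \<circ> tmap id (tmap antipode_T2 id) \<circ> tmap id \<Delta>"
    by (rule linear_map_eq_on_tens)
      (simp_all add: inv_T2_tens tmap_tens tmap_mult_left_id tmap_mlin_id_assoc_l)
  moreover have "inv T2 (\<Delta> a) = one \<otimes> a"
    by (metis T2_one_tens T2_inv_T2(2))
  ultimately show ?thesis
    by simp
qed

end

locale gmh_coquasigroup_antipode = gmh_coquasigroup mult one \<Delta> \<epsilon>
  for mult :: "('b, 'k::field) vec \<Rightarrow> ('b, 'k) vec \<Rightarrow> ('b, 'k) vec"  (infixl "\<cdot>" 75)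
    and one \<Delta> \<epsilon> +
  fixes S :: "('b, 'k) vec \<Rightarrow> ('b, 'k) vec"
  assumes is_antipode: "is_antipode mult one \<Delta> \<epsilon> S"
begin

lemma S_mult: "S a \<cdot> b = eps_id \<epsilon> (inv T1 (a \<otimes> b))"
  using is_antipode by (simp add: is_antipode_def)

lemma S_eq: "S = eps_id \<epsilon> \<circ> inv T1 \<circ> (\<lambda>a. a \<otimes> one)"
proof
  fix a
  show "S a = (eps_id \<epsilon> \<circ> inv T1 \<circ> (\<lambda>a. a \<otimes> one)) a"
    using S_mult[of a one] by simp
qed

lemma linear_map_S [simp]: "linear_map S"
  by (simp add: S_eq)

lemma inv_T1_tens: "inv T1 (a \<otimes> b) = tmap id (\<lambda>c. S c \<cdot> b) (\<Delta> a)"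
proof -
  have "linear_map (\<lambda>c. S c \<cdot> b)"
    using linear_map_comp[of "\<lambda>v. v \<cdot> b" S] by (simp add: comp_def)
  then have "tmap id (eps_id \<epsilon>) \<circ> tmap id (inv T1) \<circ> assoc_r \<circ> (\<lambda>u. u \<otimes> b)
      = (tmap id (\<lambda>c. S c \<cdot> b) :: ('b \<times> 'b, 'k) vec \<Rightarrow> _)"
    by (intro linear_map_eq_on_tens) (simp_all add: assoc_r_tens tmap_tens S_mult)
  then have "tmap id (eps_id \<epsilon>) (tmap id (inv T1) (assoc_r (\<Delta> a \<otimes> b)))
      = tmap id (\<lambda>c. S c \<cdot> b) (\<Delta> a)"
    by (simp add: fun_eq_iff)
  then show ?thesis
    by (subst inv_T1_eq) (simp add: tmap_tens)
qed

lemma T1_tmap_S_Delta: "T1 (tmap id S (\<Delta> a)) = a \<otimes> one"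
proof -
  have "inv T1 (a \<otimes> one) = tmap id S (\<Delta> a)"
    using inv_T1_tens[of a one] by simp
  then show ?thesis
    by (metis T1_inv_T1(1))
qed

lemma antipode_right_1: "tmap id (mlin mult) (assoc_r (tmap \<Delta> S (\<Delta> a))) = a \<otimes> one"
  using T1_tmap_S_Delta by (simp add: T1_tmap_id)

lemma antipode_right_2:
  "tmap id (mlin mult) (assoc_r (tmap (tmap id S) id (tmap \<Delta> id (\<Delta> a)))) = a \<otimes> one"
proof -
  have "inv T1 = tmap id (mlin mult) \<circ> assoc_r \<circ> tmap (tmap id S) id \<circ> tmap \<Delta> id"
    by (rule linear_map_eq_on_tens)
      (simp_all add: inv_T1_tens tmap_tens tmap_id_mult_right tmap_id_mlin_assoc_r)
  moreover have "inv T1 (\<Delta> a) = a \<otimes> one"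
    by (metis T1_tens_one T1_inv_T1(2))
  ultimately show ?thesis
    by simp
qed

lemma mlin_tmap_S_Delta: "mlin mult (tmap id S (\<Delta> a)) = vsc (\<epsilon> a) one"
proof -
  have "vsc (\<epsilon> a) one = eps_id \<epsilon> (T1 (tmap id S (\<Delta> a)))"
    by (simp add: T1_tmap_S_Delta eps_id_tens linear_functional_eps)
  then show ?thesis
    by (simp add: eps_id_T1)
qed

lemma antipode_T2_eq_S: "antipode_T2 = S"
proof
  fix a
  have "mlin mult \<circ> tmap id S \<circ> tmap (mlin mult) id \<circ> assoc_l \<circ> tmap antipode_T2 \<Delta>
      = antipode_T2 \<circ> id_eps \<epsilon>"
  proof (rule linear_map_eq_on_tens)
    fix x y
    have "antipode_T2 (vsc c x) = vsc c (antipode_T2 x)" for c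
      using linear_map_antipode_T2 unfolding linear_map_def by blast
    then show "(mlin mult \<circ> tmap id S \<circ> tmap (mlin mult) id \<circ> assoc_l \<circ> tmap antipode_T2 \<Delta>) (x \<otimes> y)
        = (antipode_T2 \<circ> id_eps \<epsilon>) (x \<otimes> y)"
      by (simp add: tmap_tens tmap_mlin_id_assoc_l tmap_id_tmult_left mlin_tmult_left
          mlin_tmap_S_Delta mult_vsc_right id_eps_tens linear_functional_eps)
  qed simp_all
  from fun_cong[OF this, of "\<Delta> a"]
  have "mlin mult (tmap id S (one \<otimes> a)) = antipode_T2 (id_eps \<epsilon> (\<Delta> a))"
    by (simp only: comp_apply antipode_T2_left_1)
  then show "antipode_T2 a = S a"
    by (simp add: tmap_tens counit_right)
qed

lemmas antipode_left_1 = antipode_T2_left_1[unfolded antipode_T2_eq_S]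
  and antipode_left_2 = antipode_T2_left_2[unfolded antipode_T2_eq_S]

end

theorem theorem3p1:
  fixes mult :: "('b, 'k::field) vec \<Rightarrow> ('b, 'k) vec \<Rightarrow> ('b, 'k) vec"
    and one :: "('b, 'k) vec"
    and \<Delta> :: "('b, 'k) vec \<Rightarrow> ('b \<times> 'b, 'k) vec"
    and \<epsilon> :: "('b, 'k) vec \<Rightarrow> 'k"
    and S :: "('b, 'k) vec \<Rightarrow> ('b, 'k) vec"
  assumes "gen_mult_hopf_coquasigroup mult one \<Delta> \<epsilon>"
    and "is_antipode mult one \<Delta> \<epsilon> S"
  shows "hopf_coquasigroup mult one \<Delta> \<epsilon> S"
proof -
  interpret gmh_coquasigroup_antipode mult one \<Delta> \<epsilon> S
    using assms by unfold_locales
  show ?thesis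
    unfolding hopf_coquasigroup_def
    using unital_algebra Delta_mult Delta_one linear_functional_eps eps_mult eps_one
      counit_left counit_right antipode_left_1 antipode_left_2 antipode_right_1 antipode_right_2
    by simp
qed

end
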